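(* Let $X\subset\mathbb{R}^d$ be compact and let $K\colon\mathbb{R}\times\mathbb{R}\to\mathbb{R}$ be a continuous positive definite kernel with $|K(s,t)|\le1$. Let $Z=\mathbb{R}^d\times\mathbb{R}\times\mathbb{R}$, and for $z=(a,b,t)\in Z$ put $\psi_z(x)=K(\langle a,x\rangle+b,t)$. For a finite Borel measure $\rho$ on $Z$ let $K_\rho(x,x')=\int_Z\psi_z(x)\psi_z(x')\,d\rho(z)$. Then for every finite Borel measure $\rho$ on $Z$ and every $\epsilon>0$ there exist $z_1,\dots,z_m\in Z$ and weights $w_1,\dots,w_m\ge0$ such that $$\sup_{x,x'\in X}\Big|K_\rho(x,x')-\sum_{j=1}^m w_j\psi_{z_j}(x)\psi_{z_j}(x')\Big|<\epsilon.$$ *)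

theory Defs
  imports "HOL-Analysis.Analysis"
begin

definition pos_def_kernel :: "(real \<Rightarrow> real \<Rightarrow> real) \<Rightarrow> bool" where
  "pos_def_kernel K \<longleftrightarrow> (\<forall>s t. K s t = K t s) \<and>
     (\<forall>(n::nat) (t::nat \<Rightarrow> real) (c::nat \<Rightarrow> real).
        (\<Sum>i<n. \<Sum>j<n. c i * c j * K (t i) (t j)) \<ge> 0)"

definition psi :: "(real \<Rightarrow> real \<Rightarrow> real) \<Rightarrow> ('a::euclidean_space \<times> real \<times> real) \<Rightarrow> 'a \<Rightarrow> real" where
  "psi K z x = (case z of (a, b, t) \<Rightarrow> K (inner a x + b) t)"

definition K_rho :: "(real \<Rightarrow> real \<Rightarrow> real) \<Rightarrow> ('a::euclidean_space \<times> real \<times> real) measure \<Rightarrow> 'a \<Rightarrow> 'a \<Rightarrow> real" where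
  "K_rho K \<rho> x x' = (\<integral>z. psi K z x * psi K z x' \<partial>\<rho>)"

end

theory Submission
  imports Defs
begin

text \<open>Finite Borel measures on Polish spaces are tight, so up to a small error the integral
  defining \<open>K_rho\<close> only sees a compact set \<open>C\<close> of parameters. On \<open>C \<times> X \<times> X\<close> the integrand
  \<open>\<psi>\<^sub>z(x) \<psi>\<^sub>z(x')\<close> is uniformly continuous, so partitioning \<open>C\<close> into finitely many Borel pieces
  \<open>A\<^sub>j\<close> of small diameter with representatives \<open>z\<^sub>j\<close> and taking \<open>w\<^sub>j = \<rho>(A\<^sub>j)\<close> turns the integral
  into a Riemann sum that is uniformly close to it.\<close>

lemma finite_borel_measure_tight:
  fixes M :: "'a::{second_countable_topology, complete_space} measure"
  assumes "finite_measure M" "sets M = sets borel" "e > 0"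
  obtains C where "compact C" "measure M (space M - C) < e"
proof -
  interpret finite_measure M by fact
  have space: "space M = UNIV"
    by (metis assms(2) sets_eq_imp_space_eq space_borel)
  define \<mu> where "\<mu> = measure M UNIV"
  show ?thesis
  proof (cases "\<mu> < e")
    case True
    then show ?thesis using that[of "{}"] by (simp add: \<mu>_def space)
  next
    case False
    have "ennreal (\<mu> - e) < emeasure M UNIV"
      using False assms(3) by (simp add: \<mu>_def emeasure_eq_measure space ennreal_less_iff)
    also have "\<dots> = (SUP C \<in> {C. C \<subseteq> UNIV \<and> compact C}. emeasure M C)"
      using inner_regular[OF assms(2)] space by simp
    finally obtain C where C: "compact C" "ennreal (\<mu> - e) < emeasure M C"
      by (auto simp: less_SUP_iff)
    have C_sets: "C \<in> sets M"
      using assms(2) by (simp add: borel_closed compact_imp_closed C(1))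
    have "\<mu> - e < measure M C"
      using C(2) False by (simp add: emeasure_eq_measure ennreal_less_iff)
    moreover have "measure M (space M - C) = \<mu> - measure M C"
      using finite_measure_compl[OF C_sets] by (simp add: \<mu>_def space)
    ultimately show ?thesis using that C(1) by simp
  qed
qed

lemma compact_partition_into_small_borel_sets:
  fixes C :: "'a::metric_space set"
  assumes "compact C" "d > 0"
  obtains m :: nat and c A where
    "\<And>i. i \<in> {1..m} \<Longrightarrow> c i \<in> C \<and> A i \<in> sets borel \<and> A i \<subseteq> ball (c i) d"
    "disjoint_family_on A {1..m}" "(\<Union>i\<in>{1..m}. A i) = C"
proof -
  obtain T where T: "T \<subseteq> C" "finite T" "C \<subseteq> (\<Union>t\<in>T. ball t d)"
    using compactE_image[OF assms(1), of C "\<lambda>t. ball t d"] assms(2) by force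
  obtain m :: nat and c where c: "c ` {1..m} = T"
    using ex_bij_betw_nat_finite_1[OF T(2)] bij_betw_imp_surj_on by blast
  then have cover: "C \<subseteq> (\<Union>i\<in>{1..m}. ball (c i) d)" and c_in_C: "c ` {1..m} \<subseteq> C"
    using T(1,3) by auto
  define A where "A i = C \<inter> ball (c i) d - (\<Union>j\<in>{1..<i}. ball (c j) d)" for i
  have "c i \<in> C \<and> A i \<in> sets borel \<and> A i \<subseteq> ball (c i) d" if "i \<in> {1..m}" for i
    using c_in_C that compact_imp_closed[OF assms(1)] by (auto simp: A_def borel_closed)
  moreover have "disjoint_family_on A {1..m}"
    unfolding disjoint_family_on_def
  proof (intro ballI impI)
    fix i j assume ij: "i \<in> {1..m}" "j \<in> {1..m}" "i \<noteq> j"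
    have earlier: "A k \<inter> A l = {}" if "1 \<le> k" "k < l" for k l
      using that by (auto simp: A_def)
    show "A i \<inter> A j = {}"
      using ij earlier[of i j] earlier[of j i] by (metis Int_commute atLeastAtMost_iff linorder_neqE_nat)
  qed
  moreover have "C \<subseteq> (\<Union>i\<in>{1..m}. A i)"
  proof
    fix z assume "z \<in> C"
    then have ex: "\<exists>i. i \<in> {1..m} \<and> z \<in> ball (c i) d"
      using cover by blast
    define i where "i = (LEAST i. i \<in> {1..m} \<and> z \<in> ball (c i) d)"
    have "i \<in> {1..m}" "z \<in> ball (c i) d"
      using LeastI_ex[OF ex] by (auto simp: i_def)
    moreover have "z \<notin> ball (c j) d" if "j \<in> {1..<i}" for j
      using not_less_Least[of j "\<lambda>i. i \<in> {1..m} \<and> z \<in> ball (c i) d"] that \<open>i \<in> {1..m}\<close>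
      unfolding i_def[symmetric] by auto
    ultimately show "z \<in> (\<Union>i\<in>{1..m}. A i)"
      using \<open>z \<in> C\<close> by (auto simp: A_def)
  qed
  ultimately show ?thesis
    using that[of m c A] by (auto simp: A_def)
qed

lemma integral_approx_by_partition_sum:
  fixes f :: "'a \<Rightarrow> real"
  assumes "finite_measure M" "f \<in> borel_measurable M"
    and "\<And>z. z \<in> space M \<Longrightarrow> \<bar>f z\<bar> \<le> B"
    and "finite I" "\<And>i. i \<in> I \<Longrightarrow> A i \<in> sets M" "disjoint_family_on A I"
    and "\<And>i z. i \<in> I \<Longrightarrow> z \<in> A i \<Longrightarrow> \<bar>f z - f (c i)\<bar> \<le> \<eta>"
  shows "\<bar>(\<integral>z. f z \<partial>M) - (\<Sum>i\<in>I. measure M (A i) * f (c i))\<bar>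
           \<le> \<eta> * measure M (\<Union>i\<in>I. A i) + B * measure M (space M - (\<Union>i\<in>I. A i))"
proof -
  interpret finite_measure M by fact
  define U where "U = (\<Union>i\<in>I. A i)"
  have U_sets: "U \<in> sets M"
    using assms(4,5) by (auto simp: U_def)
  define g where "g z = (\<Sum>i\<in>I. indicator (A i) z * f (c i))" for z
  have f_int: "integrable M f"
    by (rule integrable_const_bound[where B=B]) (use assms(2,3) in auto)
  have g_int: "integrable M g"
    unfolding g_def using assms(5) by (auto simp: emeasure_eq_measure)
  have integral_g: "(\<integral>z. g z \<partial>M) = (\<Sum>i\<in>I. measure M (A i) * f (c i))"
    unfolding g_def using assms(5) by (simp add: emeasure_eq_measure sets.Int_space_eq2)
  have pointwise: "\<bar>f z - g z\<bar> \<le> \<eta> * indicator U z + B * indicator (space M - U) z"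
    if "z \<in> space M" for z
  proof (cases "z \<in> U")
    case True
    then obtain i where i: "i \<in> I" "z \<in> A i" by (auto simp: U_def)
    have "z \<notin> A j" if "j \<in> I" "j \<noteq> i" for j
      using assms(6) i that by (auto simp: disjoint_family_on_def)
    then have "g z = f (c i)"
      unfolding g_def using assms(4) i by (subst sum.remove[OF _ i(1)]) auto
    then show ?thesis using True assms(7)[OF i] by simp
  next
    case False
    then have "g z = 0" by (auto simp: g_def U_def)
    then show ?thesis using False that assms(3) by simp
  qed
  have "\<bar>(\<integral>z. f z \<partial>M) - (\<integral>z. g z \<partial>M)\<bar> \<le> (\<integral>z. \<bar>f z - g z\<bar> \<partial>M)"
    using integral_abs_bound[of M "\<lambda>z. f z - g z"] f_int g_int by simp
  also have "\<dots> \<le> (\<integral>z. \<eta> * indicator U z + B * indicator (space M - U) z \<partial>M)"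
    using f_int g_int U_sets pointwise
    by (intro integral_mono) (auto simp: emeasure_eq_measure)
  also have "\<dots> = \<eta> * measure M U + B * measure M (space M - U)"
    using U_sets by (simp add: emeasure_eq_measure sets.Int_space_eq2 Int_absorb1)
  finally show ?thesis by (simp add: integral_g U_def)
qed

lemma integral_uniform_approx_by_weighted_sum:
  fixes M :: "'z::{second_countable_topology, complete_space} measure"
    and X :: "'x::metric_space set" and G :: "'z \<Rightarrow> 'x \<Rightarrow> real"
  assumes "finite_measure M" "sets M = sets borel" "compact X"
    and "continuous_on (UNIV \<times> X) (\<lambda>(z, x). G z x)"
    and "\<And>z x. x \<in> X \<Longrightarrow> \<bar>G z x\<bar> \<le> B"
    and "e > 0"
  obtains m :: nat and c w where "\<And>j. j \<in> {1..m} \<Longrightarrow> w j \<ge> 0"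
    "\<And>x. x \<in> X \<Longrightarrow> \<bar>(\<integral>z. G z x \<partial>M) - (\<Sum>j=1..m. w j * G (c j) x)\<bar> \<le> e"
proof -
  interpret finite_measure M by fact
  have space: "space M = UNIV"
    by (metis assms(2) sets_eq_imp_space_eq space_borel)
  define \<mu> where "\<mu> = measure M UNIV"
  define \<eta> where "\<eta> = e / (2 * (\<mu> + 1))"
  have "\<mu> + 1 > 0" by (simp add: \<mu>_def add_nonneg_pos)
  then have "\<eta> > 0" using assms(6) by (simp add: \<eta>_def)
  obtain C where C: "compact C" "measure M (UNIV - C) < e / (2 * (\<bar>B\<bar> + 1))"
    using finite_borel_measure_tight[OF assms(1,2), of "e / (2 * (\<bar>B\<bar> + 1))"] assms(6) space
    by (auto simp: add_pos_nonneg)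
  have "uniformly_continuous_on (C \<times> X) (\<lambda>(z, x). G z x)"
    using assms(3,4) C(1)
    by (intro compact_uniformly_continuous compact_Times continuous_on_subset[OF assms(4)]) auto
  then obtain d where d: "d > 0"
    "\<And>p q. p \<in> C \<times> X \<Longrightarrow> q \<in> C \<times> X \<Longrightarrow> dist q p < d \<Longrightarrow>
       dist ((\<lambda>(z, x). G z x) q) ((\<lambda>(z, x). G z x) p) < \<eta>"
    using \<open>\<eta> > 0\<close> unfolding uniformly_continuous_on_def by metis
  obtain m :: nat and c A where part:
    "\<And>i. i \<in> {1..m} \<Longrightarrow> c i \<in> C \<and> A i \<in> sets borel \<and> A i \<subseteq> ball (c i) d"
    "disjoint_family_on A {1..m}" "(\<Union>i\<in>{1..m}. A i) = C"
    using compact_partition_into_small_borel_sets[OF C(1) d(1)] by blast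
  have "\<bar>(\<integral>z. G z x \<partial>M) - (\<Sum>j=1..m. measure M (A j) * G (c j) x)\<bar> \<le> e" if "x \<in> X" for x
  proof -
    have "continuous_on UNIV (\<lambda>z. (\<lambda>(z, x). G z x) (z, x))"
      by (rule continuous_on_compose2[OF assms(4)]) (use that in \<open>auto intro: continuous_intros\<close>)
    then have "(\<lambda>z. G z x) \<in> borel_measurable borel"
      by (intro borel_measurable_continuous_onI) simp
    then have "(\<lambda>z. G z x) \<in> borel_measurable M"
      by (simp add: measurable_cong_sets[OF assms(2) refl])
    moreover have "\<bar>G z x - G (c i) x\<bar> \<le> \<eta>" if "i \<in> {1..m}" "z \<in> A i" for i z
    proof -
      have "c i \<in> C" "z \<in> C" "dist z (c i) < d"
        using part(1)[OF that(1)] part(3) that by (auto simp: dist_commute)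
      then show ?thesis
        using d(2)[of "(c i, x)" "(z, x)"] \<open>x \<in> X\<close> by (simp add: dist_Pair_Pair dist_real_def)
    qed
    ultimately have "\<bar>(\<integral>z. G z x \<partial>M) - (\<Sum>j=1..m. measure M (A j) * G (c j) x)\<bar>
        \<le> \<eta> * measure M C + B * measure M (UNIV - C)"
      using integral_approx_by_partition_sum[OF assms(1), of "\<lambda>z. G z x" B "{1..m}" A c \<eta>]
        assms(5)[OF that] part assms(2) by (simp add: space)
    also have "\<eta> * measure M C \<le> e / 2"
    proof -
      have "\<eta> * measure M C \<le> \<eta> * (\<mu> + 1)"
        using \<open>\<eta> > 0\<close> bounded_measure[of C] by (simp add: \<mu>_def space)
      also have "\<dots> = e / 2"
        using \<open>\<mu> + 1 > 0\<close> by (simp add: \<eta>_def field_simps)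
      finally show ?thesis .
    qed
    also have "B * measure M (UNIV - C) \<le> e / 2"
    proof -
      have "B \<ge> 0"
        using assms(5)[OF that] by (meson abs_ge_zero order_trans)
      then have "B * measure M (UNIV - C) \<le> (\<bar>B\<bar> + 1) * (e / (2 * (\<bar>B\<bar> + 1)))"
        using C(2) by (intro mult_mono') auto
      also have "\<dots> = e / 2"
        by (simp add: field_simps add_pos_nonneg)
      finally show ?thesis .
    qed
    finally show ?thesis by simp
  qed
  then show ?thesis
    using that[of m "\<lambda>j. measure M (A j)" c] by auto
qed

lemma continuous_on_psi:
  assumes "continuous_on UNIV (\<lambda>(s, t). K s t)"
  shows "continuous_on UNIV (\<lambda>(z, x::'a::euclidean_space). psi K z x)"
proof -
  have "(\<lambda>(z, x::'a). psi K z x) = (\<lambda>(s, t). K s t) \<circ>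
      (\<lambda>p. (inner (fst (fst p)) (snd p) + fst (snd (fst p)), snd (snd (fst p))))"
    by (auto simp: psi_def)
  then show ?thesis
    by (simp only:) (rule continuous_on_compose[OF _ continuous_on_subset[OF assms]],
        auto intro!: continuous_intros)
qed

lemma continuous_on_psi_product:
  assumes "continuous_on UNIV (\<lambda>(s, t). K s t)"
  shows "continuous_on UNIV
    (\<lambda>(z, p::'a::euclidean_space \<times> 'a). psi K z (fst p) * psi K z (snd p))"
proof -
  have "continuous_on UNIV (\<lambda>q::('a \<times> real \<times> real) \<times> 'a \<times> 'a. psi K (fst q) (fst (snd q)))"
    and "continuous_on UNIV (\<lambda>q::('a \<times> real \<times> real) \<times> 'a \<times> 'a. psi K (fst q) (snd (snd q)))"
    using continuous_on_compose2[OF continuous_on_psi[OF assms], of UNIV "\<lambda>q. (fst q, fst (snd q))"]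
      continuous_on_compose2[OF continuous_on_psi[OF assms], of UNIV "\<lambda>q. (fst q, snd (snd q))"]
    by (simp_all add: continuous_intros)
  then show ?thesis
    unfolding case_prod_unfold by (rule continuous_on_mult)
qed

lemma abs_psi_le_1:
  assumes "\<And>s t. \<bar>K s t\<bar> \<le> 1"
  shows "\<bar>psi K z x\<bar> \<le> 1"
  using assms by (simp add: psi_def split: prod.splits)

theorem lemma2:
  fixes X :: "'a::euclidean_space set"
    and K :: "real \<Rightarrow> real \<Rightarrow> real"
    and \<rho> :: "('a \<times> real \<times> real) measure"
    and \<epsilon> :: real
  assumes "compact X"
    and "continuous_on UNIV (\<lambda>(s, t). K s t)"
    and "pos_def_kernel K"
    and "\<And>s t. \<bar>K s t\<bar> \<le> 1"
    and "sets \<rho> = sets borel"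
    and "finite_measure \<rho>"
    and "\<epsilon> > 0"
  shows "\<exists>(m::nat) (z::nat \<Rightarrow> 'a \<times> real \<times> real) (w::nat \<Rightarrow> real).
           (\<forall>j\<in>{1..m}. w j \<ge> 0) \<and>
           (\<exists>\<delta> < \<epsilon>. \<forall>x\<in>X. \<forall>x'\<in>X.
              \<bar>K_rho K \<rho> x x' - (\<Sum>j=1..m. w j * psi K (z j) x * psi K (z j) x')\<bar> \<le> \<delta>)"
proof -
  define G where "G z p = psi K z (fst p) * psi K z (snd p)" for z and p :: "'a \<times> 'a"
  have G_cont: "continuous_on UNIV (\<lambda>(z, p). G z p)"
    unfolding G_def using continuous_on_psi_product[OF assms(2)] .
  have G_bound: "\<bar>G z p\<bar> \<le> 1" for z p
    unfolding G_def abs_mult by (intro mult_le_one abs_psi_le_1[OF assms(4)] abs_ge_zero)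
  obtain m :: nat and z w where weights: "\<And>j. j \<in> {1..m} \<Longrightarrow> w j \<ge> 0"
    and approx: "\<And>p. p \<in> X \<times> X \<Longrightarrow> \<bar>(\<integral>y. G y p \<partial>\<rho>) - (\<Sum>j=1..m. w j * G (z j) p)\<bar> \<le> \<epsilon> / 2"
    by (rule integral_uniform_approx_by_weighted_sum[OF assms(6,5) compact_Times[OF assms(1,1)]
          continuous_on_subset[OF G_cont subset_UNIV] G_bound, of "\<epsilon> / 2"])
      (use assms(7) in auto)
  have "\<bar>K_rho K \<rho> x x' - (\<Sum>j=1..m. w j * psi K (z j) x * psi K (z j) x')\<bar> \<le> \<epsilon> / 2"
    if "x \<in> X" "x' \<in> X" for x x'
    using approx[of "(x, x')"] that by (simp add: G_def K_rho_def mult.assoc)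
  then show ?thesis
    using weights assms(7) by (intro exI[of _ m] exI[of _ z] exI[of _ w]) (auto intro!: exI[of _ "\<epsilon> / 2"])
qed

end
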